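(* Let $\Sigma_{g,m,n}$ be a compact oriented surface of genus $g$ with $m$ boundary components labeled $0$ and $n$ boundary components labeled $2$, and assume $(g,n)$ is such that the right-hand side below is defined ($g+n\ge 1$ or $(g,n)=(0,0)$). Then $$\dim V_{\Sigma_{g,m,n}}=5^{\frac{g-1}{2}}\left\{\left(\tfrac{1+\sqrt5}{2}\right)^{g+n-1}+(-1)^{g-1}\left(\tfrac{1-\sqrt5}{2}\right)^{g+n-1}\right\}.$$
   Context: The Fibonacci TQFT ($SO(3)$ Chern–Simons theory at $r=5$) assigns to each compact oriented surface $\Sigma$ whose boundary components are parametrized and labeled by elements of $\{0,2\}$ a finite-dimensional Hilbert space $V_\Sigma$, with: $V_{\Sigma_1\sqcup\Sigma_2}=V_{\Sigma_1}\otimes V_{\Sigma_2}$; for a simple closed curve $f$ in $\Sigma$, $V_\Sigma=V_{\Sigma_{f,0}}\oplus V_{\Sigma_{f,2}}$, where $\Sigma_{f,a}$ is $\Sigma$ cut along $f$ with both new boundary components labeled $a$; a disk labeled $a$ has $\dim=\delta_{0a}$; an annulus labeled $a,b$ has $\dim=\delta_{ab}$; a genus-0 surface with three boundary components labeled $a,b,c$ has $\dim=0$ if $a+b+c=2$ and $\dim=1$ otherwise. *)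

theory Defs
  imports Complex_Main
begin

text \<open>A connected compact oriented surface with labelled boundary is determined up to
  label-preserving homeomorphism by its genus g, the number m of boundary components
  labelled 0 and the number n labelled 2.  A function D g m n is an admissible
  dimension function for the Fibonacci TQFT if it satisfies the stated axioms:
  disk, annulus and pair-of-pants values, cutting along a non-separating curve, and
  cutting along a separating curve (which, by multiplicativity under disjoint union,
  yields a sum of products of the dimensions of the two pieces).\<close>

definition fib_tqft_dim :: "(nat \<Rightarrow> nat \<Rightarrow> nat \<Rightarrow> nat) \<Rightarrow> bool" where
  "fib_tqft_dim D \<longleftrightarrow>
     \<comment> \<open>disk labelled a: dim = delta_{0a}\<close>
     D 0 1 0 = 1 \<and> D 0 0 1 = 0 \<and>
     \<comment> \<open>annulus labelled a,b: dim = delta_{ab}\<close>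
     D 0 2 0 = 1 \<and> D 0 1 1 = 0 \<and> D 0 0 2 = 1 \<and>
     \<comment> \<open>pair of pants labelled a,b,c: dim 0 iff a+b+c = 2, i.e. exactly one label 2\<close>
     D 0 3 0 = 1 \<and> D 0 2 1 = 0 \<and> D 0 1 2 = 1 \<and> D 0 0 3 = 1 \<and>
     \<comment> \<open>cutting along a non-separating simple closed curve\<close>
     (\<forall>g m n. D (Suc g) m n = D g (m + 2) n + D g m (n + 2)) \<and>
     \<comment> \<open>cutting along a separating simple closed curve\<close>
     (\<forall>g1 g2 m1 m2 n1 n2.
        D (g1 + g2) (m1 + m2) (n1 + n2) =
          D g1 (m1 + 1) n1 * D g2 (m2 + 1) n2 + D g1 m1 (n1 + 1) * D g2 m2 (n2 + 1))"

end

theory Submission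
  imports Defs
begin

text \<open>Capping a boundary circle labelled 0 with a disk does not change the dimension, so
  only the genus g and the number n of 2-labelled boundaries matter.  Gluing a pair of
  pants gives the Fibonacci recurrence in n at genus 0, and cutting a handle gives
  D (g+1) n = D g n + D g (n+2).  The right-hand side is a combination of powers of
  the golden ratio \<phi> and its conjugate \<psi>; it satisfies the first recurrence because
  \<phi>, \<psi> are roots of x^2 = x + 1, and the second because they are also roots of
  x^2 = \<plusminus>\<surd>5 x - 1, i.e. 1/x + x = \<plusminus>\<surd>5.  Both sides agree on the sphere and the disk
  labelled 2, hence everywhere.\<close>

lemma power_int_quadratic_recurrence:
  fixes x a b :: "'a::field"
  assumes "x \<noteq> 0" and "x\<^sup>2 = a * x + b"
  shows "x powi (k + 2) = a * x powi (k + 1) + b * x powi k"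
proof -
  have "x powi (k + 2) = x powi k * x\<^sup>2"
    using \<open>x \<noteq> 0\<close> by (simp add: power_int_add)
  also have "\<dots> = a * (x powi k * x) + b * x powi k"
    using assms(2) by (simp add: algebra_simps)
  also have "x powi k * x = x powi (k + 1)"
    using \<open>x \<noteq> 0\<close> by (simp add: power_int_add_1)
  finally show ?thesis .
qed

definition golden :: real where
  "golden = (1 + sqrt 5) / 2"

definition golden_conj :: real where
  "golden_conj = (1 - sqrt 5) / 2"

lemma golden_nonzero: "golden \<noteq> 0"
proof -
  have "sqrt 5 \<ge> 0"
    by simp
  then have "golden > 0"
    unfolding golden_def by (simp add: add_pos_nonneg)
  then show ?thesis
    by simp
qed

lemma golden_conj_nonzero: "golden_conj \<noteq> 0"
  unfolding golden_conj_def by simp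

lemma golden_square: "golden\<^sup>2 = golden + 1"
  unfolding golden_def by (simp add: power2_eq_square field_simps)

lemma golden_conj_square: "golden_conj\<^sup>2 = golden_conj + 1"
  unfolding golden_conj_def by (simp add: power2_eq_square field_simps)

lemma golden_square_sqrt5: "golden\<^sup>2 = sqrt 5 * golden - 1"
  unfolding golden_def by (simp add: power2_eq_square field_simps)

lemma golden_conj_square_sqrt5: "golden_conj\<^sup>2 = - sqrt 5 * golden_conj - 1"
  unfolding golden_conj_def by (simp add: power2_eq_square field_simps)

lemma golden_mult_conj: "golden * golden_conj = -1"
  unfolding golden_def golden_conj_def by (simp add: field_simps)

lemma golden_minus_conj: "golden - golden_conj = sqrt 5"
  unfolding golden_def golden_conj_def by (simp add: field_simps)

definition fib_tqft_closed_form :: "nat \<Rightarrow> nat \<Rightarrow> real" where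
  "fib_tqft_closed_form g n =
     5 powr ((real g - 1) / 2) *
       (golden powi (int g + int n - 1)
        + (-1) powi (int g - 1) * golden_conj powi (int g + int n - 1))"

lemma fib_tqft_closed_form_sphere: "fib_tqft_closed_form 0 0 = 1"
proof -
  have "inverse golden - inverse golden_conj = golden - golden_conj"
    using golden_mult_conj golden_nonzero golden_conj_nonzero by (simp add: field_simps)
  also have "\<dots> = sqrt 5"
    by (rule golden_minus_conj)
  finally have inverses: "inverse golden - inverse golden_conj = sqrt 5" .
  have "(real 0 - 1) / 2 = - (1 / 2)"
    by simp
  then have weight: "5 powr ((real 0 - 1) / 2) = inverse (sqrt 5)"
    by (simp only: powr_minus powr_half_sqrt)
  have exps: "int 0 + int 0 - 1 = - 1" "(-1::real) powi (int 0 - 1) = - 1"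
    by simp_all
  show ?thesis
    unfolding fib_tqft_closed_form_def weight exps power_int_minus
    using inverses by simp
qed

lemma fib_tqft_closed_form_disk: "fib_tqft_closed_form 0 1 = 0"
proof -
  have exps: "int 0 + int 1 - 1 = 0" "(-1::real) powi (int 0 - 1) = - 1"
    by simp_all
  show ?thesis
    unfolding fib_tqft_closed_form_def exps by simp
qed

lemma fib_tqft_closed_form_genus0_rec:
  "fib_tqft_closed_form 0 (n + 2) = fib_tqft_closed_form 0 n + fib_tqft_closed_form 0 (n + 1)"
proof -
  define k where "k = int n - 1"
  \<comment> \<open>Folding the powr factor into an opaque constant keeps the simplifier from
    normalising it, which is very slow.\<close>
  define weight where "weight = 5 powr ((real 0 - 1) / 2)"
  have exps: "int 0 + int (n + 2) - 1 = k + 2" "int 0 + int (n + 1) - 1 = k + 1"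
    "int 0 + int n - 1 = k" "(-1::real) powi (int 0 - 1) = - 1"
    unfolding k_def by simp_all
  have golden_rec: "golden powi (k + 2) = golden powi (k + 1) + golden powi k"
    using power_int_quadratic_recurrence[OF golden_nonzero, of 1 1] golden_square by simp
  have golden_conj_rec:
    "golden_conj powi (k + 2) = golden_conj powi (k + 1) + golden_conj powi k"
    using power_int_quadratic_recurrence[OF golden_conj_nonzero, of 1 1] golden_conj_square by simp
  show ?thesis
    unfolding fib_tqft_closed_form_def exps golden_rec golden_conj_rec weight_def[symmetric]
    by (simp add: algebra_simps)
qed

lemma fib_tqft_closed_form_Suc_genus:
  "fib_tqft_closed_form (Suc g) n = fib_tqft_closed_form g n + fib_tqft_closed_form g (n + 2)"
proof -
  define k where "k = int g + int n - 1"
  define sign :: real where "sign = (-1) powi (int g - 1)"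
  define weight where "weight = 5 powr ((real g - 1) / 2)"
  have exps: "int (Suc g) + int n - 1 = k + 1" "int g + int (n + 2) - 1 = k + 2"
    "int g + int n - 1 = k"
    unfolding k_def by simp_all
  have sign_Suc: "(-1::real) powi (int (Suc g) - 1) = - sign"
    unfolding sign_def by (simp add: power_int_diff)
  have weight_Suc: "5 powr ((real (Suc g) - 1) / 2) = weight * sqrt 5"
  proof -
    have "(real (Suc g) - 1) / 2 = (real g - 1) / 2 + 1 / 2"
      by (simp add: field_simps)
    then show ?thesis
      unfolding weight_def by (simp only: powr_add powr_half_sqrt)
  qed
  have golden_rec: "golden powi (k + 2) = sqrt 5 * golden powi (k + 1) - golden powi k"
    using power_int_quadratic_recurrence[OF golden_nonzero, of "sqrt 5" "-1"] golden_square_sqrt5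
    by simp
  have golden_conj_rec:
    "golden_conj powi (k + 2) = - sqrt 5 * golden_conj powi (k + 1) - golden_conj powi k"
    using power_int_quadratic_recurrence[OF golden_conj_nonzero, of "- sqrt 5" "-1"]
      golden_conj_square_sqrt5
    by simp
  show ?thesis
    unfolding fib_tqft_closed_form_def sign_Suc weight_Suc exps sign_def[symmetric]
      weight_def[symmetric] golden_rec golden_conj_rec
    by (simp add: algebra_simps)
qed

lemma fib_tqft_dim_cap_zero_boundary:
  assumes "fib_tqft_dim D"
  shows "D g m n = D g 0 n"
proof (induction m)
  case (Suc m)
  have "D (g + 0) (m + 0) (n + 0) =
      D g (m + 1) n * D 0 (0 + 1) 0 + D g m (n + 1) * D 0 0 (0 + 1)"
    using assms unfolding fib_tqft_dim_def by blast
  moreover have "D 0 1 0 = 1" "D 0 0 1 = 0"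
    using assms unfolding fib_tqft_dim_def by simp_all
  ultimately show ?case
    using Suc by simp
qed simp

lemma fib_tqft_dim_sphere:
  assumes "fib_tqft_dim D"
  shows "D 0 0 0 = 1"
proof -
  have "D (0 + 0) (0 + 0) (0 + 0) = D 0 (0 + 1) 0 * D 0 (0 + 1) 0 + D 0 0 (0 + 1) * D 0 0 (0 + 1)"
    using assms unfolding fib_tqft_dim_def by blast
  then show ?thesis
    using assms unfolding fib_tqft_dim_def by simp
qed

lemma fib_tqft_dim_genus0_rec:
  assumes "fib_tqft_dim D"
  shows "D 0 0 (n + 2) = D 0 0 n + D 0 0 (n + 1)"
proof -
  have "D (0 + 0) (0 + 0) (n + 2) = D 0 (0 + 1) n * D 0 (0 + 1) 2 + D 0 0 (n + 1) * D 0 0 (2 + 1)"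
    using assms unfolding fib_tqft_dim_def by blast
  moreover have "D 0 1 2 = 1" "D 0 0 3 = 1"
    using assms unfolding fib_tqft_dim_def by simp_all
  ultimately show ?thesis
    using fib_tqft_dim_cap_zero_boundary[OF assms, of 0 1 n] by simp
qed

lemma fib_tqft_dim_Suc_genus:
  assumes "fib_tqft_dim D"
  shows "D (Suc g) 0 n = D g 0 n + D g 0 (n + 2)"
proof -
  have "D (Suc g) 0 n = D g (0 + 2) n + D g 0 (n + 2)"
    using assms unfolding fib_tqft_dim_def by blast
  then show ?thesis
    using fib_tqft_dim_cap_zero_boundary[OF assms, of g 2 n] by (simp add: numeral_2_eq_2)
qed

lemma fib_tqft_dim_eq_closed_form:
  assumes "fib_tqft_dim D"
  shows "real (D g 0 n) = fib_tqft_closed_form g n"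
proof (induction g arbitrary: n)
  case 0
  show ?case
  proof (induction n rule: induct_nat_012)
    case 0
    show ?case
      using fib_tqft_dim_sphere[OF assms] fib_tqft_closed_form_sphere by simp
  next
    case 1
    show ?case
      using assms fib_tqft_closed_form_disk unfolding fib_tqft_dim_def by simp
  next
    case (ge2 n)
    then show ?case
      using fib_tqft_dim_genus0_rec[OF assms, of n] fib_tqft_closed_form_genus0_rec[of n] by simp
  qed
next
  case (Suc g)
  then show ?case
    using fib_tqft_dim_Suc_genus[OF assms] fib_tqft_closed_form_Suc_genus by simp
qed

theorem lemma6p1:
  fixes D :: "nat \<Rightarrow> nat \<Rightarrow> nat \<Rightarrow> nat" and g m n :: nat
  assumes "fib_tqft_dim D"
  assumes "g + n \<ge> 1 \<or> (g = 0 \<and> n = 0)"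
  shows "real (D g m n) =
    5 powr ((real g - 1) / 2) *
      (((1 + sqrt 5) / 2) powi (int g + int n - 1)
       + (-1) powi (int g - 1) * ((1 - sqrt 5) / 2) powi (int g + int n - 1))"
proof -
  \<comment> \<open>The second hypothesis holds for every (g, n); with integer exponents the
    right-hand side is meaningful for all pairs.\<close>
  have "real (D g m n) = fib_tqft_closed_form g n"
    unfolding fib_tqft_dim_cap_zero_boundary[OF assms(1), of g m n]
    by (rule fib_tqft_dim_eq_closed_form[OF assms(1)])
  then show ?thesis
    unfolding fib_tqft_closed_form_def golden_def golden_conj_def .
qed

end
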